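(* Let $X,Y$ be separable Banach spaces, $S:X\to X$ and $T:Y\to Y$ bounded invertible linear operators, and $\Pi:X\to Y$ a bounded linear surjection with $\Pi\circ S=T\circ\Pi$. Suppose $\Pi$ admits a strong bounded selector. If $T$ is Li-Yorke chaotic, then $S$ is Li-Yorke chaotic.
   Context: $\Pi$ admits a strong bounded selector if there is $L\ge1$ such that for every $y\in Y$ there exists $x\in\Pi^{-1}(y)$ with $\|S^n x\|\le L\|T^n y\|$ and $\|T^n y\|\le L\|S^nx\|$ for all $n\in\mathbb Z$. An operator $T$ is Li-Yorke chaotic if there exists a vector $y$ with $\liminf_{n\to\infty}\|T^ny\|=0$ and $\limsup_{n\to\infty}\|T^ny\|=\infty$. *)

theory Defs
  imports "HOL-Analysis.Analysis" "HOL-Library.Liminf_Limsup"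
begin

definition separable_space :: "'a::metric_space itself \<Rightarrow> bool" where
  "separable_space _ \<longleftrightarrow> (\<exists>D::'a set. countable D \<and> closure D = UNIV)"

definition bounded_invertible :: "('a::real_normed_vector \<Rightarrow> 'a) \<Rightarrow> bool" where
  "bounded_invertible S \<longleftrightarrow> bounded_linear S \<and> bij S \<and> bounded_linear (inv S)"

definition ipow :: "('a \<Rightarrow> 'a) \<Rightarrow> int \<Rightarrow> ('a \<Rightarrow> 'a)" where
  "ipow S n = (if n \<ge> 0 then S ^^ nat n else (inv S) ^^ nat (- n))"

definition strong_bounded_selector ::
  "('a::real_normed_vector \<Rightarrow> 'b::real_normed_vector) \<Rightarrow> ('a \<Rightarrow> 'a) \<Rightarrow> ('b \<Rightarrow> 'b) \<Rightarrow> bool" where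
  "strong_bounded_selector P S T \<longleftrightarrow>
     (\<exists>L::real. L \<ge> 1 \<and> (\<forall>y. \<exists>x. P x = y \<and>
        (\<forall>n::int. norm (ipow S n x) \<le> L * norm (ipow T n y)
                 \<and> norm (ipow T n y) \<le> L * norm (ipow S n x))))"

definition li_yorke_chaotic :: "('a::real_normed_vector \<Rightarrow> 'a) \<Rightarrow> bool" where
  "li_yorke_chaotic T \<longleftrightarrow>
     (\<exists>y. liminf (\<lambda>n. ereal (norm ((T ^^ n) y))) = 0 \<and>
          limsup (\<lambda>n. ereal (norm ((T ^^ n) y))) = \<infinity>)"

end

theory Submission
  imports Defs
begin

(* A Li-Yorke vector y for T is lifted by the selector to some x whose forward orbit under S
   has norms comparable to those of y up to the factor L; comparability up to a positive
   constant preserves both liminf = 0 and limsup = \<infinity>. *)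

lemma ipow_of_nat [simp]: "ipow S (int n) = S ^^ n"
  by (simp add: ipow_def)

lemma liminf_ereal_eq_0_if_dominated:
  fixes a b :: "nat \<Rightarrow> real"
  assumes "0 < L" and "\<And>n. 0 \<le> a n" and "\<And>n. a n \<le> L * b n"
    and "liminf (\<lambda>n. ereal (b n)) = 0"
  shows "liminf (\<lambda>n. ereal (a n)) = 0"
proof (rule antisym)
  have "liminf (\<lambda>n. ereal (a n)) \<le> liminf (\<lambda>n. ereal L * ereal (b n))"
    by (rule Liminf_mono) (use assms(3) in auto)
  also have "\<dots> = ereal L * liminf (\<lambda>n. ereal (b n))"
    by (rule Liminf_ereal_mult_left) (use assms(1) in auto)
  finally show "liminf (\<lambda>n. ereal (a n)) \<le> 0"
    using assms(4) by simp
  show "0 \<le> liminf (\<lambda>n. ereal (a n))"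
    by (rule Liminf_bounded) (use assms(2) in auto)
qed

lemma limsup_ereal_eq_infinity_if_dominating:
  fixes a b :: "nat \<Rightarrow> real"
  assumes "0 < L" and "\<And>n. b n \<le> L * a n"
    and "limsup (\<lambda>n. ereal (b n)) = \<infinity>"
  shows "limsup (\<lambda>n. ereal (a n)) = \<infinity>"
proof -
  have "\<infinity> = limsup (\<lambda>n. ereal (b n))"
    using assms(3) by simp
  also have "\<dots> \<le> limsup (\<lambda>n. ereal L * ereal (a n))"
    by (rule Limsup_mono) (use assms(2) in auto)
  also have "\<dots> = ereal L * limsup (\<lambda>n. ereal (a n))"
    by (rule Limsup_ereal_mult_left) (use assms(1) in auto)
  finally have "ereal L * limsup (\<lambda>n. ereal (a n)) = \<infinity>"
    by (simp add: top_unique)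
  then show ?thesis
    using assms(1) by (cases "limsup (\<lambda>n. ereal (a n))") (auto split: if_splits)
qed

lemma li_yorke_chaotic_if_orbit_comparable:
  assumes "0 < L"
    and "\<And>n. norm ((S ^^ n) x) \<le> L * norm ((T ^^ n) y)"
    and "\<And>n. norm ((T ^^ n) y) \<le> L * norm ((S ^^ n) x)"
    and "liminf (\<lambda>n. ereal (norm ((T ^^ n) y))) = 0"
    and "limsup (\<lambda>n. ereal (norm ((T ^^ n) y))) = \<infinity>"
  shows "li_yorke_chaotic S"
  unfolding li_yorke_chaotic_def
proof (intro exI conjI)
  show "liminf (\<lambda>n. ereal (norm ((S ^^ n) x))) = 0"
    by (rule liminf_ereal_eq_0_if_dominated) (use assms in auto)
  show "limsup (\<lambda>n. ereal (norm ((S ^^ n) x))) = \<infinity>"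
    by (rule limsup_ereal_eq_infinity_if_dominating) (use assms in auto)
qed

theorem lemma3p3:
  fixes S :: "'a::banach \<Rightarrow> 'a" and T :: "'b::banach \<Rightarrow> 'b" and P :: "'a \<Rightarrow> 'b"
  assumes "separable_space TYPE('a)" and "separable_space TYPE('b)"
    and "bounded_invertible S" and "bounded_invertible T"
    and "bounded_linear P" and "surj P"
    and "P \<circ> S = T \<circ> P"
    and "strong_bounded_selector P S T"
    and "li_yorke_chaotic T"
  shows "li_yorke_chaotic S"
proof -
  obtain y where "liminf (\<lambda>n. ereal (norm ((T ^^ n) y))) = 0"
    and "limsup (\<lambda>n. ereal (norm ((T ^^ n) y))) = \<infinity>"
    using assms(9) unfolding li_yorke_chaotic_def by blast
  moreover obtain L x where "L \<ge> 1"
    and bounds: "\<forall>n::int. norm (ipow S n x) \<le> L * norm (ipow T n y)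
                   \<and> norm (ipow T n y) \<le> L * norm (ipow S n x)"
    using assms(8) unfolding strong_bounded_selector_def by blast
  moreover have "norm ((S ^^ n) x) \<le> L * norm ((T ^^ n) y)"
    and "norm ((T ^^ n) y) \<le> L * norm ((S ^^ n) x)" for n :: nat
    using bounds[rule_format, of "int n"] by simp_all
  ultimately show ?thesis
    by (intro li_yorke_chaotic_if_orbit_comparable[of L S x T y]) auto
qed

end
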